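(* The $\mathbf k$-linear map $\varphi:\mathrm{WCQSym}\to\mathrm{QSym}$, defined by $\varphi(M_\alpha)=(-1)^{\ell_\varepsilon(\alpha)}M_{\bar\alpha}$ if $\alpha\in\mathcal C_N$ and $\varphi(M_\alpha)=0$ if $\alpha\in\mathcal C_\varepsilon$, is a coalgebra homomorphism, i.e. $\Delta_{\mathbb N}\circ\varphi=(\varphi\otimes\varphi)\circ\Delta_W$ and $\epsilon_{\mathbb N}\circ\varphi=\epsilon_W$.
   Context: $\tilde{\mathbb N}=\mathbb N\cup\{\varepsilon\}$ with $0+\varepsilon=\varepsilon+\varepsilon=\varepsilon$ and $n+\varepsilon=n$ for integers $n\ge1$. $\mathbf{k}$ is a commutative ring containing $\mathbb Q$; $\mathbf{k}[[X]]_{\tilde{\mathbb N}}$, $X=\{x_1<x_2<\cdots\}$, is the algebra of possibly infinite linear combinations of formal monomials $\prod x_i^{f(x_i)}$ with $f$ finitely supported $\tilde{\mathbb N}$-valued. An $\tilde{\mathbb N}$-composition is a finite (possibly empty) sequence of elements of $\{\varepsilon,1,2,\dots\}$; $M_{(\alpha_1,\dots,\alpha_k)}=\sum_{1\le i_1<\cdots<i_k}x_{i_1}^{\alpha_1}\cdots x_{i_k}^{\alpha_k}$, $M_\emptyset=1$. $\mathrm{WCQSym}$ is the free $\mathbf k$-module spanned by all $M_\alpha$, with coproduct $\Delta_W(M_{(\alpha_1,\dots,\alpha_k)})=\sum_{i=0}^kM_{(\alpha_1,\dots,\alpha_i)}\otimes M_{(\alpha_{i+1},\dots,\alpha_k)}$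 and counit $\epsilon_W(M_\alpha)=\delta_{\alpha,\emptyset}$; $\mathrm{QSym}$ is the span of the $M_\alpha$ with all entries positive integers, with coproduct $\Delta_{\mathbb N}$ and counit $\epsilon_{\mathbb N}$ given by the same formulas. $\ell_\varepsilon(\alpha)$ is the number of entries equal to $\varepsilon$, $\bar\alpha$ is $\alpha$ with its $\varepsilon$ entries deleted. $\mathcal C_\varepsilon$ is the set of $\tilde{\mathbb N}$-compositions with first entry $\varepsilon$, $\mathcal C_N$ the set of all others (including the empty one). *)

theory Defs
  imports Main
begin

text \<open>Entries of \<open>\<tilde>N\<close>-compositions: \<open>Eps\<close> is \<open>\<epsilon>\<close>, \<open>Num n\<close> is the integer n
  (only n \<ge> 1 is allowed in a composition).\<close>
datatype ntilde = Eps | Num nat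

type_synonym wcomp = "ntilde list"
type_synonym comp = "nat list"

definition valid_wcomp :: "wcomp \<Rightarrow> bool" where
  "valid_wcomp \<alpha> \<longleftrightarrow> (\<forall>x\<in>set \<alpha>. x = Eps \<or> (\<exists>n. x = Num n \<and> n \<ge> 1))"

definition valid_comp :: "comp \<Rightarrow> bool" where
  "valid_comp \<alpha> \<longleftrightarrow> (\<forall>n\<in>set \<alpha>. n \<ge> 1)"

text \<open>Elements of the free module with basis indexed by \<open>'b\<close> are coefficient
  functions with finite support.\<close>
definition supp :: "('b \<Rightarrow> 'k::zero) \<Rightarrow> 'b set" where
  "supp f = {x. f x \<noteq> 0}"

text \<open>Linear extension of a map given on basis elements (image of basis element x
  is the coefficient function T x).\<close>
definition lin :: "('b \<Rightarrow> 'c \<Rightarrow> 'k::comm_semiring_1) \<Rightarrow> ('b \<Rightarrow> 'k) \<Rightarrow> ('c \<Rightarrow> 'k)" where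
  "lin T f = (\<lambda>y. \<Sum>x\<in>supp f. f x * T x y)"

definition WCQSym :: "(wcomp \<Rightarrow> 'k::zero) set" where
  "WCQSym = {f. finite (supp f) \<and> (\<forall>\<alpha>\<in>supp f. valid_wcomp \<alpha>)}"

text \<open>Coproduct on basis: \<open>M_\<alpha> \<mapsto> \<Sum>_i M_{\<alpha>_1..\<alpha>_i} \<otimes> M_{\<alpha>_{i+1}..\<alpha>_k}\<close>;
  the tensor square of a free module is free on pairs of basis elements.\<close>
definition DeltaW_basis :: "wcomp \<Rightarrow> (wcomp \<times> wcomp) \<Rightarrow> 'k::comm_semiring_1" where
  "DeltaW_basis \<alpha> = (\<lambda>(a, b). \<Sum>i\<in>{0..length \<alpha>}.
       (if a = take i \<alpha> \<and> b = drop i \<alpha> then 1 else 0))"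

definition DeltaN_basis :: "comp \<Rightarrow> (comp \<times> comp) \<Rightarrow> 'k::comm_semiring_1" where
  "DeltaN_basis \<alpha> = (\<lambda>(a, b). \<Sum>i\<in>{0..length \<alpha>}.
       (if a = take i \<alpha> \<and> b = drop i \<alpha> then 1 else 0))"

definition DeltaW :: "(wcomp \<Rightarrow> 'k::comm_semiring_1) \<Rightarrow> (wcomp \<times> wcomp \<Rightarrow> 'k)" where
  "DeltaW = lin DeltaW_basis"

definition DeltaN :: "(comp \<Rightarrow> 'k::comm_semiring_1) \<Rightarrow> (comp \<times> comp \<Rightarrow> 'k)" where
  "DeltaN = lin DeltaN_basis"

definition epsW :: "(wcomp \<Rightarrow> 'k::comm_semiring_1) \<Rightarrow> 'k" where
  "epsW f = (\<Sum>\<alpha>\<in>supp f. f \<alpha> * (if \<alpha> = [] then 1 else 0))"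

definition epsN :: "(comp \<Rightarrow> 'k::comm_semiring_1) \<Rightarrow> 'k" where
  "epsN f = (\<Sum>\<alpha>\<in>supp f. f \<alpha> * (if \<alpha> = [] then 1 else 0))"

definition tensor_map ::
  "('a \<Rightarrow> 'c \<Rightarrow> 'k::comm_semiring_1) \<Rightarrow> ('b \<Rightarrow> 'd \<Rightarrow> 'k) \<Rightarrow> ('a \<times> 'b \<Rightarrow> 'k) \<Rightarrow> ('c \<times> 'd \<Rightarrow> 'k)" where
  "tensor_map S T = lin (\<lambda>(a, b) (c, d). S a c * T b d)"

definition ell_eps :: "wcomp \<Rightarrow> nat" where
  "ell_eps \<alpha> = length (filter (\<lambda>x. x = Eps) \<alpha>)"

fun entry_val :: "ntilde \<Rightarrow> nat" where
  "entry_val Eps = 0" | "entry_val (Num n) = n"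

definition bar :: "wcomp \<Rightarrow> comp" where
  "bar \<alpha> = map entry_val (filter (\<lambda>x. x \<noteq> Eps) \<alpha>)"

definition in_C_eps :: "wcomp \<Rightarrow> bool" where
  "in_C_eps \<alpha> \<longleftrightarrow> \<alpha> \<noteq> [] \<and> hd \<alpha> = Eps"

definition phi_basis :: "wcomp \<Rightarrow> comp \<Rightarrow> 'k::comm_ring_1" where
  "phi_basis \<alpha> = (\<lambda>\<beta>. if in_C_eps \<alpha> then 0
       else (if \<beta> = bar \<alpha> then (-1) ^ ell_eps \<alpha> else 0))"

definition phi :: "(wcomp \<Rightarrow> 'k::comm_ring_1) \<Rightarrow> (comp \<Rightarrow> 'k)" where
  "phi = lin phi_basis"

end

theory Submission
  imports Defs
begin

text \<open>Let \<open>\<psi>(M_\<alpha>) = (-1)^\<ell>_\<epsilon>(\<alpha>) M_bar(\<alpha>)\<close>, so that \<open>\<phi>(M_\<alpha>) = \<psi>(M_\<alpha>)\<close> unless \<open>\<alpha>\<close>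
  starts with \<open>\<epsilon>\<close>. In \<open>(\<psi> \<otimes> \<phi>)(\<Delta>_W M_\<alpha>)\<close> every deconcatenation whose right factor
  starts with \<open>\<epsilon>\<close> is killed; the surviving cuts of \<open>\<alpha>\<close> (before a positive entry, or at
  the end) correspond bijectively to the cuts of \<open>bar(\<alpha>)\<close>, always with sign
  \<open>(-1)^\<ell>_\<epsilon>(\<alpha>)\<close>, so the sum is \<open>(-1)^\<ell>_\<epsilon>(\<alpha>) \<Delta>_N M_bar(\<alpha>)\<close>. If \<open>\<alpha>\<close> does not start
  with \<open>\<epsilon>\<close>, neither do its left factors, so \<open>\<phi>\<close> may replace \<open>\<psi>\<close> on the left; if it does,
  both sides vanish.\<close>

lemma sum_supp_superset:
  assumes "finite A" "supp g \<subseteq> A"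
  shows "(\<Sum>z\<in>supp g. g z * h z) = (\<Sum>z\<in>A. (g z :: 'k::comm_semiring_1) * h z)"
  by (rule sum.mono_neutral_left) (use assms in \<open>auto simp: supp_def\<close>)

lemma sum_supp_delta:
  assumes "finite (supp g)"
  shows "(\<Sum>x\<in>supp g. g x * (if x = a then 1 else 0)) = (g a :: 'k::comm_semiring_1)"
proof -
  have "(\<Sum>x\<in>supp g. g x * (if x = a then 1 else 0)) = (\<Sum>x\<in>supp g. if x = a then g x else 0)"
    by (rule sum.cong) auto
  also have "\<dots> = g a"
    using assms by (simp add: sum.delta' supp_def)
  finally show ?thesis .
qed

lemma supp_lin_subset: "supp (lin T f) \<subseteq> (\<Union>x\<in>supp f. supp (T x))"
proof
  fix y assume "y \<in> supp (lin T f)"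
  then have "(\<Sum>x\<in>supp f. f x * T x y) \<noteq> 0"
    by (simp add: supp_def lin_def)
  then obtain x where "x \<in> supp f" "f x * T x y \<noteq> 0"
    by (meson sum.neutral)
  then show "y \<in> (\<Union>x\<in>supp f. supp (T x))"
    by (auto simp: supp_def)
qed

lemma finite_supp_lin:
  assumes "finite (supp f)" "\<And>x. finite (supp (T x))"
  shows "finite (supp (lin T f))"
  using assms by (blast intro: finite_subset[OF supp_lin_subset])

lemma lin_lin:
  assumes fin: "finite (supp f)" and finT: "\<And>x. finite (supp (T x))"
  shows "lin U (lin T f) y = (\<Sum>x\<in>supp f. f x * (\<Sum>z\<in>supp (T x). T x z * U z y))"
proof -
  define B where "B = (\<Union>x\<in>supp f. supp (T x))"
  have finB: "finite B"
    using fin finT by (simp add: B_def)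
  have "lin U (lin T f) y = (\<Sum>z\<in>B. lin T f z * U z y)"
    unfolding lin_def[of U] using supp_lin_subset[of T f]
    by (intro sum_supp_superset[OF finB]) (simp add: B_def)
  also have "\<dots> = (\<Sum>x\<in>supp f. f x * (\<Sum>z\<in>B. T x z * U z y))"
    by (simp add: lin_def sum_distrib_right sum_distrib_left mult.assoc sum.swap[of _ B])
  also have "\<dots> = (\<Sum>x\<in>supp f. f x * (\<Sum>z\<in>supp (T x). T x z * U z y))"
    by (intro sum.cong refl arg_cong[where f = "(*) _"] sum_supp_superset[OF finB, symmetric])
       (auto simp: B_def)
  finally show ?thesis .
qed

lemma supp_DeltaW_basis:
  "supp (DeltaW_basis \<alpha> :: _ \<Rightarrow> 'k::comm_semiring_1)
     \<subseteq> (\<lambda>i. (take i \<alpha>, drop i \<alpha>)) ` {0..length \<alpha>}"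
proof
  fix z assume "z \<in> supp (DeltaW_basis \<alpha> :: _ \<Rightarrow> 'k)"
  moreover obtain a b where z: "z = (a, b)"
    by (cases z)
  ultimately have
    "(\<Sum>i\<in>{0..length \<alpha>}. if a = take i \<alpha> \<and> b = drop i \<alpha> then 1 else 0 :: 'k) \<noteq> 0"
    by (simp add: supp_def DeltaW_basis_def)
  then obtain i where "i \<in> {0..length \<alpha>}" "a = take i \<alpha> \<and> b = drop i \<alpha>"
    by (rule sum.not_neutral_contains_not_neutral) (simp split: if_splits)
  with z show "z \<in> (\<lambda>i. (take i \<alpha>, drop i \<alpha>)) ` {0..length \<alpha>}"
    by blast
qed

lemma finite_supp_DeltaW_basis: "finite (supp (DeltaW_basis \<alpha> :: _ \<Rightarrow> 'k::comm_semiring_1))"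
  by (rule finite_subset[OF supp_DeltaW_basis]) simp

lemma sum_DeltaW_basis:
  "(\<Sum>z\<in>supp (DeltaW_basis \<alpha> :: _ \<Rightarrow> 'k::comm_semiring_1). DeltaW_basis \<alpha> z * (g z :: 'k))
     = (\<Sum>i\<in>{0..length \<alpha>}. g (take i \<alpha>, drop i \<alpha>))"
proof -
  let ?A = "(\<lambda>i. (take i \<alpha>, drop i \<alpha>)) ` {0..length \<alpha>}"
  have "(\<Sum>z\<in>supp (DeltaW_basis \<alpha> :: _ \<Rightarrow> 'k). DeltaW_basis \<alpha> z * g z)
      = (\<Sum>z\<in>?A. DeltaW_basis \<alpha> z * g z)"
    by (rule sum_supp_superset[OF _ supp_DeltaW_basis]) simp
  also have "\<dots> = (\<Sum>z\<in>?A. \<Sum>i\<in>{0..length \<alpha>}. if z = (take i \<alpha>, drop i \<alpha>) then g z else 0)"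
    by (auto simp: DeltaW_basis_def sum_distrib_right split: prod.splits intro!: sum.cong)
  also have "\<dots> = (\<Sum>i\<in>{0..length \<alpha>}. g (take i \<alpha>, drop i \<alpha>))"
    by (subst sum.swap) (simp add: sum.delta')
  finally show ?thesis .
qed

lemma DeltaN_basis_Nil_left: "DeltaN_basis \<beta> ([], d) = (if d = \<beta> then 1 else 0)"
  by (cases \<beta>) (simp_all only: DeltaN_basis_def prod.case length_Cons
      sum.atLeast0_atMost_Suc_shift, auto)

lemma DeltaN_basis_Cons_left:
  "DeltaN_basis (n # \<beta>) (h # t, d) = (if h = n then DeltaN_basis \<beta> (t, d) else 0)"
  unfolding DeltaN_basis_def
  by (simp only: prod.case length_Cons sum.atLeast0_atMost_Suc_shift) auto

lemma bar_simps [simp]: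
  "bar [] = []" "bar (Eps # \<alpha>) = bar \<alpha>" "bar (Num n # \<alpha>) = n # bar \<alpha>"
  by (simp_all add: bar_def)

lemma ell_eps_simps [simp]:
  "ell_eps [] = 0" "ell_eps (Eps # \<alpha>) = Suc (ell_eps \<alpha>)" "ell_eps (Num n # \<alpha>) = ell_eps \<alpha>"
  by (simp_all add: ell_eps_def)

definition signed_bar :: "wcomp \<Rightarrow> comp \<Rightarrow> 'k::comm_ring_1" where
  "signed_bar \<alpha> \<beta> = (if \<beta> = bar \<alpha> then (-1) ^ ell_eps \<alpha> else 0)"

lemma signed_bar_simps:
  "signed_bar [] \<beta> = (if \<beta> = [] then 1 else 0)"
  "signed_bar (Eps # \<alpha>) \<beta> = - signed_bar \<alpha> \<beta>"
  "signed_bar (Num n # \<alpha>) [] = 0"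
  "signed_bar (Num n # \<alpha>) (h # t) = (if h = n then signed_bar \<alpha> t else 0)"
  by (auto simp: signed_bar_def)

lemma phi_basis_simps:
  "phi_basis [] = signed_bar []"
  "phi_basis (Eps # \<alpha>) = (\<lambda>_. 0)"
  "phi_basis (Num n # \<alpha>) = signed_bar (Num n # \<alpha>)"
  by (auto simp: phi_basis_def signed_bar_def in_C_eps_def)

lemma phi_basis_Nil: "phi_basis \<alpha> [] = (if \<alpha> = [] then 1 else 0)"
  by (cases \<alpha>; cases "hd \<alpha>") (auto simp: phi_basis_def in_C_eps_def)

lemma finite_supp_phi_basis: "finite (supp (phi_basis \<alpha> :: _ \<Rightarrow> 'k::comm_ring_1))"
  by (rule finite_subset[of _ "{bar \<alpha>}"]) (auto simp: supp_def phi_basis_def)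

lemma sum_supp_phi_basis:
  "(\<Sum>\<beta>\<in>supp (phi_basis \<alpha> :: _ \<Rightarrow> 'k::comm_ring_1). phi_basis \<alpha> \<beta> * (g \<beta> :: 'k))
     = phi_basis \<alpha> (bar \<alpha>) * g (bar \<alpha>)"
proof -
  have "(\<Sum>\<beta>\<in>supp (phi_basis \<alpha> :: _ \<Rightarrow> 'k). phi_basis \<alpha> \<beta> * g \<beta>)
      = (\<Sum>\<beta>\<in>{bar \<alpha>}. phi_basis \<alpha> \<beta> * g \<beta>)"
    by (rule sum_supp_superset) (auto simp: supp_def phi_basis_def)
  then show ?thesis
    by simp
qed

lemma signed_bar_phi_basis_deconcat:
  "(\<Sum>i\<in>{0..length \<alpha>}. signed_bar (take i \<alpha>) c * phi_basis (drop i \<alpha>) d)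
     = ((-1) ^ ell_eps \<alpha> * DeltaN_basis (bar \<alpha>) (c, d) :: 'k::comm_ring_1)"
proof (induction \<alpha> arbitrary: c)
  case Nil
  then show ?case
    by (simp add: phi_basis_simps signed_bar_def DeltaN_basis_def)
next
  case (Cons x \<alpha>)
  note split_first = length_Cons sum.atLeast0_atMost_Suc_shift
  show ?case
  proof (cases x)
    case Eps
    then show ?thesis
      using Cons.IH[of c]
      by (simp only: split_first)
         (simp add: phi_basis_simps signed_bar_simps sum_negf)
  next
    case (Num n)
    show ?thesis
    proof (cases c)
      case Nil
      with Num show ?thesis
        by (simp only: split_first)
           (simp add: phi_basis_simps signed_bar_simps signed_bar_def DeltaN_basis_Nil_left)
    next
      case (Cons h t)
      with Num show ?thesis
        using Cons.IH[of t]
        by (simp only: split_first)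
           (simp add: phi_basis_simps signed_bar_simps DeltaN_basis_Cons_left)
    qed
  qed
qed

lemma phi_basis_deconcat:
  "(\<Sum>i\<in>{0..length \<alpha>}. phi_basis (take i \<alpha>) c * phi_basis (drop i \<alpha>) d)
     = (phi_basis \<alpha> (bar \<alpha>) * DeltaN_basis (bar \<alpha>) (c, d) :: 'k::comm_ring_1)"
proof (cases "in_C_eps \<alpha>")
  case True
  then obtain \<beta> where "\<alpha> = Eps # \<beta>"
    by (cases \<alpha>) (auto simp: in_C_eps_def)
  then show ?thesis
    by (simp only: length_Cons sum.atLeast0_atMost_Suc_shift) (simp add: phi_basis_simps)
next
  case False
  then consider "\<alpha> = []" | n \<beta> where "\<alpha> = Num n # \<beta>"
    by (metis in_C_eps_def list.sel(1) list.exhaust ntilde.exhaust)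
  then have "(phi_basis (take i \<alpha>) :: _ \<Rightarrow> 'k) = signed_bar (take i \<alpha>)" for i
    by cases (cases i; simp add: phi_basis_simps)+
  moreover have "phi_basis \<alpha> (bar \<alpha>) = ((-1) ^ ell_eps \<alpha> :: 'k)"
    using False by (simp add: phi_basis_def)
  ultimately show ?thesis
    by (simp add: signed_bar_phi_basis_deconcat)
qed

lemma DeltaN_phi:
  assumes "finite (supp f)"
  shows "DeltaN (phi f) = tensor_map phi_basis phi_basis (DeltaW (f :: wcomp \<Rightarrow> 'k::comm_ring_1))"
proof
  fix p :: "comp \<times> comp"
  obtain c d where p: "p = (c, d)"
    by (cases p)
  have "DeltaN (phi f) p = (\<Sum>\<alpha>\<in>supp f. f \<alpha> * (phi_basis \<alpha> (bar \<alpha>) * DeltaN_basis (bar \<alpha>) p))"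
    unfolding DeltaN_def phi_def
    by (simp add: lin_lin[OF assms finite_supp_phi_basis] sum_supp_phi_basis)
  also have "\<dots> = (\<Sum>\<alpha>\<in>supp f. f \<alpha> *
      (\<Sum>i\<in>{0..length \<alpha>}. phi_basis (take i \<alpha>) c * phi_basis (drop i \<alpha>) d))"
    by (simp add: phi_basis_deconcat p)
  also have "\<dots> = tensor_map phi_basis phi_basis (DeltaW f) p"
    unfolding tensor_map_def DeltaW_def
    by (simp add: lin_lin[OF assms finite_supp_DeltaW_basis] sum_DeltaW_basis p)
  finally show "DeltaN (phi f) p = tensor_map phi_basis phi_basis (DeltaW f) p" .
qed

lemma epsN_phi:
  assumes "finite (supp f)"
  shows "epsN (phi f) = epsW (f :: wcomp \<Rightarrow> 'k::comm_ring_1)"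
proof -
  have "finite (supp (phi f))"
    unfolding phi_def using assms finite_supp_phi_basis by (rule finite_supp_lin)
  then have "epsN (phi f) = phi f []"
    unfolding epsN_def by (rule sum_supp_delta)
  also have "\<dots> = f []"
    unfolding phi_def lin_def phi_basis_Nil using assms by (rule sum_supp_delta)
  also have "\<dots> = epsW f"
    unfolding epsW_def using assms by (rule sum_supp_delta[symmetric])
  finally show ?thesis .
qed

theorem lemma3p7:
  fixes f :: "wcomp \<Rightarrow> 'k::comm_ring_1"
  assumes rat: "\<forall>n::nat. n \<noteq> 0 \<longrightarrow> (\<exists>y::'k. of_nat n * y = 1)"
    and f: "f \<in> WCQSym"
  shows "DeltaN (phi f) = tensor_map phi_basis phi_basis (DeltaW f)
         \<and> epsN (phi f) = epsW f"
proof -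
  have "finite (supp f)"
    using f by (simp add: WCQSym_def)
  then show ?thesis
    by (simp add: DeltaN_phi epsN_phi)
qed

end
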